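(* Let $|\psi\rangle$ be a normalized pure three-qubit state such that the reduced density matrix of one of its qubits is maximally mixed (equal to $\frac12 I$). Then $G(|\psi\rangle)^2=\frac12$. In particular $G(|\mathrm{GHZ}\rangle)^2=\frac12$ for $|\mathrm{GHZ}\rangle=\frac{1}{\sqrt2}(|000\rangle+|111\rangle)$.
   Context: For a normalized pure three-qubit state, $G(|\psi\rangle):=\max|\langle a|\langle b|\langle c|\psi\rangle|$ over all normalized single-qubit states $|a\rangle,|b\rangle,|c\rangle$. *)

theory Defs
  imports Complex_Main
begin

text \<open>Computational basis of a qubit indexed by bool (False = 0, True = 1).\<close>

definition qubit_normalized :: "(bool \<Rightarrow> complex) \<Rightarrow> bool" where
  "qubit_normalized a \<longleftrightarrow> (\<Sum>i\<in>UNIV. (cmod (a i))\<^sup>2) = 1"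

definition state3_normalized :: "(bool \<Rightarrow> bool \<Rightarrow> bool \<Rightarrow> complex) \<Rightarrow> bool" where
  "state3_normalized \<psi> \<longleftrightarrow> (\<Sum>i\<in>UNIV. \<Sum>j\<in>UNIV. \<Sum>k\<in>UNIV. (cmod (\<psi> i j k))\<^sup>2) = 1"

definition overlap3 :: "(bool \<Rightarrow> complex) \<Rightarrow> (bool \<Rightarrow> complex) \<Rightarrow> (bool \<Rightarrow> complex)
    \<Rightarrow> (bool \<Rightarrow> bool \<Rightarrow> bool \<Rightarrow> complex) \<Rightarrow> complex" where
  "overlap3 a b c \<psi> = (\<Sum>i\<in>UNIV. \<Sum>j\<in>UNIV. \<Sum>k\<in>UNIV.
      cnj (a i) * cnj (b j) * cnj (c k) * \<psi> i j k)"

definition G :: "(bool \<Rightarrow> bool \<Rightarrow> bool \<Rightarrow> complex) \<Rightarrow> real" where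
  "G \<psi> = (SUP abc \<in> {(a, b, c). qubit_normalized a \<and> qubit_normalized b \<and> qubit_normalized c}.
      cmod (overlap3 (fst abc) (fst (snd abc)) (snd (snd abc)) \<psi>))"

definition rho1 :: "(bool \<Rightarrow> bool \<Rightarrow> bool \<Rightarrow> complex) \<Rightarrow> bool \<Rightarrow> bool \<Rightarrow> complex" where
  "rho1 \<psi> i i' = (\<Sum>j\<in>UNIV. \<Sum>k\<in>UNIV. \<psi> i j k * cnj (\<psi> i' j k))"

definition rho2 :: "(bool \<Rightarrow> bool \<Rightarrow> bool \<Rightarrow> complex) \<Rightarrow> bool \<Rightarrow> bool \<Rightarrow> complex" where
  "rho2 \<psi> j j' = (\<Sum>i\<in>UNIV. \<Sum>k\<in>UNIV. \<psi> i j k * cnj (\<psi> i j' k))"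

definition rho3 :: "(bool \<Rightarrow> bool \<Rightarrow> bool \<Rightarrow> complex) \<Rightarrow> bool \<Rightarrow> bool \<Rightarrow> complex" where
  "rho3 \<psi> k k' = (\<Sum>i\<in>UNIV. \<Sum>j\<in>UNIV. \<psi> i j k * cnj (\<psi> i j k'))"

definition half_identity :: "bool \<Rightarrow> bool \<Rightarrow> complex" where
  "half_identity i i' = (if i = i' then 1/2 else 0)"

definition GHZ :: "bool \<Rightarrow> bool \<Rightarrow> bool \<Rightarrow> complex" where
  "GHZ i j k = (if i = j \<and> j = k then complex_of_real (1 / sqrt 2) else 0)"

end

theory Submission
  imports Defs "HOL-Analysis.Convex"
begin

(* Contracting psi with a vector alpha on the first qubit gives a 2x2 matrix
   X_alpha(j,k) = sum_i alpha_i psi(i,j,k), and <a b c|psi> = <b c|X_conj(a)>.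
   If rho1 psi = I/2, the Frobenius norm satisfies |X_alpha|^2 = |alpha|^2 / 2.

   Upper bound: by Cauchy-Schwarz |<b c|X>|^2 <= |b|^2 |c|^2 |X|^2, hence every
   overlap with a product state has squared modulus at most 1/2.
   Lower bound: det X_alpha is a binary quadratic form in alpha, so it has a
   nontrivial complex zero; for that alpha the matrix X_alpha has rank one,
   X_alpha = x (x) y, and the normalised x, y realise |<b c|X_alpha>|^2 = |X_alpha|^2 = 1/2. *)

definition sqnorm :: "('a::finite \<Rightarrow> complex) \<Rightarrow> real" where
  "sqnorm x = (\<Sum>i\<in>UNIV. (cmod (x i))\<^sup>2)"

definition frob2 :: "('a::finite \<Rightarrow> 'b::finite \<Rightarrow> complex) \<Rightarrow> real" where
  "frob2 X = (\<Sum>j\<in>UNIV. \<Sum>k\<in>UNIV. (cmod (X j k))\<^sup>2)"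

definition overlap2 :: "('a::finite \<Rightarrow> complex) \<Rightarrow> ('b::finite \<Rightarrow> complex)
    \<Rightarrow> ('a \<Rightarrow> 'b \<Rightarrow> complex) \<Rightarrow> complex" where
  "overlap2 b c X = (\<Sum>j\<in>UNIV. \<Sum>k\<in>UNIV. cnj (b j) * cnj (c k) * X j k)"

lemma qubit_normalized_iff_sqnorm: "qubit_normalized a \<longleftrightarrow> sqnorm a = 1"
  by (simp add: qubit_normalized_def sqnorm_def)

lemma sqnorm_divide: "sqnorm (\<lambda>i. x i / s) = sqnorm x / (cmod s)\<^sup>2"
  by (simp add: sqnorm_def norm_divide power_divide sum_divide_distrib)

lemma sqnorm_eq_0_iff: "sqnorm x = 0 \<longleftrightarrow> x = (\<lambda>_. 0)"
  by (simp add: sqnorm_def sum_nonneg_eq_0_iff fun_eq_iff)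

lemma sqnorm_nonneg: "sqnorm x \<ge> 0"
  by (simp add: sqnorm_def sum_nonneg)

lemma sqnorm_normalize:
  assumes "x \<noteq> (\<lambda>_. 0)"
  shows "sqnorm (\<lambda>i. x i / of_real (sqrt (sqnorm x))) = 1"
proof -
  have "sqnorm x \<noteq> 0" using assms sqnorm_eq_0_iff by blast
  then show ?thesis using sqnorm_nonneg[of x] by (simp add: sqnorm_divide)
qed

lemma inner_normalized_self:
  "(\<Sum>i\<in>UNIV. cnj (x i / of_real (sqrt (sqnorm x))) * x i) = of_real (sqrt (sqnorm x))"
proof -
  have "(\<Sum>i\<in>UNIV. cnj (x i / of_real (sqrt (sqnorm x))) * x i)
      = (\<Sum>i\<in>UNIV. of_real ((cmod (x i))\<^sup>2)) / of_real (sqrt (sqnorm x))"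
    by (simp only: sum_divide_distrib complex_norm_square complex_cnj_divide)
       (simp add: mult.commute)
  also have "\<dots> = of_real (sqnorm x / sqrt (sqnorm x))"
    by (simp add: sqnorm_def)
  also have "sqnorm x / sqrt (sqnorm x) = sqrt (sqnorm x)"
    using sqnorm_nonneg[of x] by (simp add: real_div_sqrt)
  finally show ?thesis .
qed

lemma cmod_sum_mult_Cauchy_Schwarz:
  "(cmod (\<Sum>i\<in>A. u i * v i))\<^sup>2 \<le> (\<Sum>i\<in>A. (cmod (u i))\<^sup>2) * (\<Sum>i\<in>A. (cmod (v i))\<^sup>2)"
proof -
  have "cmod (\<Sum>i\<in>A. u i * v i) \<le> (\<Sum>i\<in>A. cmod (u i) * cmod (v i))"
    using norm_sum[of "\<lambda>i. u i * v i" A] by (simp add: norm_mult)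
  then have "(cmod (\<Sum>i\<in>A. u i * v i))\<^sup>2 \<le> (\<Sum>i\<in>A. cmod (u i) * cmod (v i))\<^sup>2"
    by (simp add: power_mono)
  also have "\<dots> \<le> (\<Sum>i\<in>A. (cmod (u i))\<^sup>2) * (\<Sum>i\<in>A. (cmod (v i))\<^sup>2)"
    by (rule Cauchy_Schwarz_ineq_sum)
  finally show ?thesis .
qed

lemma sum_UNIV_pairs:
  "(\<Sum>j\<in>UNIV. \<Sum>k\<in>UNIV. f j k) = (\<Sum>p\<in>UNIV. f (fst p) (snd p))"
  unfolding sum.cartesian_product UNIV_Times_UNIV by (simp add: case_prod_unfold)

lemma overlap2_bound: "(cmod (overlap2 b c X))\<^sup>2 \<le> sqnorm b * sqnorm c * frob2 X"
proof -
  define u where "u p = cnj (b (fst p)) * cnj (c (snd p))" for p :: "'a \<times> 'b"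
  define v where "v p = X (fst p) (snd p)" for p :: "'a \<times> 'b"
  have "overlap2 b c X = (\<Sum>p\<in>UNIV. u p * v p)"
    unfolding overlap2_def sum_UNIV_pairs u_def v_def ..
  moreover have "(\<Sum>p\<in>UNIV. (cmod (u p))\<^sup>2) = sqnorm b * sqnorm c"
    unfolding sqnorm_def sum_product sum_UNIV_pairs u_def
    by (simp add: norm_mult power_mult_distrib)
  moreover have "(\<Sum>p\<in>UNIV. (cmod (v p))\<^sup>2) = frob2 X"
    unfolding frob2_def sum_UNIV_pairs v_def ..
  ultimately show ?thesis
    using cmod_sum_mult_Cauchy_Schwarz[of u v UNIV] by simp
qed

lemma overlap2_tensor:
  "overlap2 b c (\<lambda>j k. x j * y k) = (\<Sum>j\<in>UNIV. cnj (b j) * x j) * (\<Sum>k\<in>UNIV. cnj (c k) * y k)"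
  by (simp add: overlap2_def sum_product algebra_simps)

lemma frob2_tensor: "frob2 (\<lambda>j k. x j * y k) = sqnorm x * sqnorm y"
  by (simp add: frob2_def sqnorm_def sum_product norm_mult power_mult_distrib)

lemma overlap2_tensor_attains:
  assumes "x \<noteq> (\<lambda>_. 0)" "y \<noteq> (\<lambda>_. 0)"
  shows "\<exists>b c. sqnorm b = 1 \<and> sqnorm c = 1
           \<and> (cmod (overlap2 b c (\<lambda>j k. x j * y k)))\<^sup>2 = frob2 (\<lambda>j k. x j * y k)"
proof (intro exI conjI)
  let ?b = "\<lambda>j. x j / of_real (sqrt (sqnorm x))" and ?c = "\<lambda>k. y k / of_real (sqrt (sqnorm y))"
  show "sqnorm ?b = 1" "sqnorm ?c = 1" using assms by (simp_all add: sqnorm_normalize)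
  have "overlap2 ?b ?c (\<lambda>j k. x j * y k) = of_real (sqrt (sqnorm x) * sqrt (sqnorm y))"
    unfolding overlap2_tensor inner_normalized_self by simp
  then show "(cmod (overlap2 ?b ?c (\<lambda>j k. x j * y k)))\<^sup>2 = frob2 (\<lambda>j k. x j * y k)"
    by (simp add: frob2_tensor norm_mult power_mult_distrib sqnorm_nonneg)
qed

definition det2 :: "(bool \<Rightarrow> bool \<Rightarrow> complex) \<Rightarrow> complex" where
  "det2 M = M False False * M True True - M False True * M True False"

lemma rank_one_of_det2_zero:
  assumes det: "det2 M = 0" and nonzero: "M \<noteq> (\<lambda>_ _. 0)"
  shows "\<exists>x y. x \<noteq> (\<lambda>_. 0) \<and> y \<noteq> (\<lambda>_. 0) \<and> M = (\<lambda>j k. x j * y k)"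
proof -
  obtain j0 k0 where nz: "M j0 k0 \<noteq> 0"
    using nonzero by (auto simp: fun_eq_iff)
  have minors: "M j k * M j0 k0 = M j k0 * M j0 k" for j k
    using det by (cases j; cases k; cases j0; cases k0) (simp_all add: det2_def algebra_simps)
  define x where "x j = M j k0" for j
  define y where "y k = M j0 k / M j0 k0" for k
  have "M = (\<lambda>j k. x j * y k)"
    using minors nz by (simp add: fun_eq_iff x_def y_def field_simps)
  moreover have "x j0 \<noteq> 0" "y k0 \<noteq> 0"
    using nz by (simp_all add: x_def y_def)
  ultimately show ?thesis by (metis (mono_tags))
qed

lemma overlap2_attains_frob2:
  assumes "det2 X = 0" "X \<noteq> (\<lambda>_ _. 0)"
  shows "\<exists>b c. sqnorm b = 1 \<and> sqnorm c = 1 \<and> (cmod (overlap2 b c X))\<^sup>2 = frob2 X"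
  using rank_one_of_det2_zero[OF assms] overlap2_tensor_attains by blast

definition contract1 :: "(bool \<Rightarrow> complex) \<Rightarrow> (bool \<Rightarrow> bool \<Rightarrow> bool \<Rightarrow> complex)
    \<Rightarrow> bool \<Rightarrow> bool \<Rightarrow> complex" where
  "contract1 \<alpha> \<psi> j k = (\<Sum>i\<in>UNIV. \<alpha> i * \<psi> i j k)"

lemma overlap3_contract1:
  "overlap3 a b c \<psi> = overlap2 b c (contract1 (\<lambda>i. cnj (a i)) \<psi>)"
  by (simp add: overlap3_def overlap2_def contract1_def UNIV_bool algebra_simps)

lemma frob2_contract1:
  assumes "rho1 \<psi> = half_identity"
  shows "frob2 (contract1 \<alpha> \<psi>) = sqnorm \<alpha> / 2"
proof -
  have rho: "rho1 \<psi> i i' = half_identity i i'" for i i'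
    using assms by simp
  have "complex_of_real (frob2 (contract1 \<alpha> \<psi>))
      = (\<Sum>j\<in>UNIV. \<Sum>k\<in>UNIV. contract1 \<alpha> \<psi> j k * cnj (contract1 \<alpha> \<psi> j k))"
    by (simp only: frob2_def of_real_sum complex_norm_square)
  also have "\<dots> = (\<Sum>i\<in>UNIV. \<Sum>i'\<in>UNIV. \<alpha> i * cnj (\<alpha> i') * rho1 \<psi> i i')"
    by (simp add: rho1_def contract1_def UNIV_bool algebra_simps)
  also have "\<dots> = (\<Sum>i\<in>UNIV. \<alpha> i * cnj (\<alpha> i)) / 2"
    by (simp add: rho half_identity_def UNIV_bool add_divide_distrib)
  also have "\<dots> = complex_of_real (sqnorm \<alpha> / 2)"
    by (simp only: sqnorm_def of_real_sum complex_norm_square of_real_divide) simp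
  finally show ?thesis
    using of_real_eq_iff by blast
qed

lemma det2_contract1_quadratic:
  "\<exists>A B C. \<forall>\<alpha>. det2 (contract1 \<alpha> \<psi>)
      = A * (\<alpha> False)\<^sup>2 + B * \<alpha> False * \<alpha> True + C * (\<alpha> True)\<^sup>2"
proof (intro exI allI)
  fix \<alpha> :: "bool \<Rightarrow> complex"
  show "det2 (contract1 \<alpha> \<psi>)
      = (\<psi> False False False * \<psi> False True True - \<psi> False False True * \<psi> False True False)
          * (\<alpha> False)\<^sup>2
      + (\<psi> False False False * \<psi> True True True + \<psi> True False False * \<psi> False True True
          - \<psi> False False True * \<psi> True True False - \<psi> True False True * \<psi> False True False)
          * \<alpha> False * \<alpha> True
      + (\<psi> True False False * \<psi> True True True - \<psi> True False True * \<psi> True True False)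
          * (\<alpha> True)\<^sup>2"
    by (simp add: det2_def contract1_def UNIV_bool power2_eq_square algebra_simps)
qed

lemma contract1_divide: "contract1 (\<lambda>i. \<alpha> i / s) \<psi> = (\<lambda>j k. contract1 \<alpha> \<psi> j k / s)"
  by (simp add: contract1_def sum_divide_distrib fun_eq_iff)

lemma det2_divide: "det2 (\<lambda>j k. M j k / s) = det2 M / s\<^sup>2"
  by (simp add: det2_def power2_eq_square diff_divide_distrib)

lemma binary_quadratic_form_zero:
  fixes A B C :: complex
  shows "\<exists>u v. (u \<noteq> 0 \<or> v \<noteq> 0) \<and> A * u\<^sup>2 + B * u * v + C * v\<^sup>2 = 0"
proof (cases "A = 0")
  case True
  then show ?thesis by (intro exI[of _ 1] exI[of _ 0]) simp
next
  case False
  define s where "s = csqrt (B\<^sup>2 - 4 * A * C)"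
  have s2: "s\<^sup>2 = B\<^sup>2 - 4 * A * C" by (simp add: s_def)
  define u where "u = (s - B) / (2 * A)"
  have "A * u\<^sup>2 + B * u * 1 + C * 1\<^sup>2 = (s\<^sup>2 - B\<^sup>2 + 4 * A * C) / (4 * A)"
    using False by (simp add: u_def field_simps power2_eq_square)
  also have "\<dots> = 0" using s2 by simp
  finally show ?thesis by (intro exI[of _ u] exI[of _ 1]) simp
qed

lemma singular_contraction_exists:
  "\<exists>\<alpha>. sqnorm \<alpha> = 1 \<and> det2 (contract1 \<alpha> \<psi>) = 0"
proof -
  obtain A B C where form: "\<And>\<alpha>. det2 (contract1 \<alpha> \<psi>)
      = A * (\<alpha> False)\<^sup>2 + B * \<alpha> False * \<alpha> True + C * (\<alpha> True)\<^sup>2"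
    using det2_contract1_quadratic by blast
  obtain u v where uv: "u \<noteq> 0 \<or> v \<noteq> 0" "A * u\<^sup>2 + B * u * v + C * v\<^sup>2 = 0"
    using binary_quadratic_form_zero by blast
  define \<beta> where "\<beta> i = (if i then v else u)" for i
  define s where "s = complex_of_real (sqrt (sqnorm \<beta>))"
  have "\<beta> \<noteq> (\<lambda>_. 0)"
    using uv(1) by (auto simp: \<beta>_def fun_eq_iff)
  then have unit: "sqnorm (\<lambda>i. \<beta> i / s) = 1"
    unfolding s_def by (rule sqnorm_normalize)
  have "det2 (contract1 (\<lambda>i. \<beta> i / s) \<psi>) = det2 (contract1 \<beta> \<psi>) / s\<^sup>2"
    by (simp add: contract1_divide det2_divide)
  also have "det2 (contract1 \<beta> \<psi>) = 0"
    using uv(2) by (simp add: form \<beta>_def)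
  finally show ?thesis using unit by auto
qed

lemma overlap3_sq_le_half:
  assumes "rho1 \<psi> = half_identity"
    and "qubit_normalized a" "qubit_normalized b" "qubit_normalized c"
  shows "(cmod (overlap3 a b c \<psi>))\<^sup>2 \<le> 1/2"
proof -
  have unit: "sqnorm a = 1" "sqnorm b = 1" "sqnorm c = 1"
    using assms(2-4) by (simp_all add: qubit_normalized_iff_sqnorm)
  have "(cmod (overlap3 a b c \<psi>))\<^sup>2
      \<le> sqnorm b * sqnorm c * frob2 (contract1 (\<lambda>i. cnj (a i)) \<psi>)"
    unfolding overlap3_contract1 by (rule overlap2_bound)
  also have "\<dots> = 1/2"
    using unit by (simp add: frob2_contract1[OF assms(1)] sqnorm_def)
  finally show ?thesis .
qed

lemma overlap3_sq_half_attained: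
  assumes "rho1 \<psi> = half_identity"
  shows "\<exists>a b c. qubit_normalized a \<and> qubit_normalized b \<and> qubit_normalized c
           \<and> (cmod (overlap3 a b c \<psi>))\<^sup>2 = 1/2"
proof -
  obtain \<alpha> where unit: "sqnorm \<alpha> = 1" and sing: "det2 (contract1 \<alpha> \<psi>) = 0"
    using singular_contraction_exists by blast
  have norm_half: "frob2 (contract1 \<alpha> \<psi>) = 1/2"
    using unit by (simp add: frob2_contract1[OF assms])
  then have "contract1 \<alpha> \<psi> \<noteq> (\<lambda>_ _. 0)"
    by (auto simp: frob2_def)
  then obtain b c where bc: "sqnorm b = 1" "sqnorm c = 1"
      "(cmod (overlap2 b c (contract1 \<alpha> \<psi>)))\<^sup>2 = 1/2"
    using overlap2_attains_frob2[OF sing] norm_half by metis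
  define a where "a i = cnj (\<alpha> i)" for i
  have "qubit_normalized a"
    using unit by (simp add: qubit_normalized_iff_sqnorm sqnorm_def a_def)
  moreover have "(cmod (overlap3 a b c \<psi>))\<^sup>2 = 1/2"
    using bc(3) by (simp add: overlap3_contract1 a_def)
  ultimately show ?thesis
    using bc(1,2) by (auto simp: qubit_normalized_iff_sqnorm)
qed

definition overlap_values :: "(bool \<Rightarrow> bool \<Rightarrow> bool \<Rightarrow> complex) \<Rightarrow> real set" where
  "overlap_values \<psi> = {cmod (overlap3 a b c \<psi>) | a b c.
      qubit_normalized a \<and> qubit_normalized b \<and> qubit_normalized c}"

lemma G_eq_Sup_overlap_values: "G \<psi> = Sup (overlap_values \<psi>)"
proof -
  let ?f = "\<lambda>abc. cmod (overlap3 (fst abc) (fst (snd abc)) (snd (snd abc)) \<psi>)"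
  let ?S = "{(a, b, c). qubit_normalized a \<and> qubit_normalized b \<and> qubit_normalized c}"
  have "?f ` ?S = overlap_values \<psi>"
  proof (intro set_eqI iffI)
    fix x assume "x \<in> ?f ` ?S"
    then obtain a b c where "qubit_normalized a" "qubit_normalized b" "qubit_normalized c"
        "x = cmod (overlap3 a b c \<psi>)"
      by auto
    then show "x \<in> overlap_values \<psi>"
      unfolding overlap_values_def by blast
  next
    fix x assume "x \<in> overlap_values \<psi>"
    then obtain a b c where "qubit_normalized a" "qubit_normalized b" "qubit_normalized c"
        "x = cmod (overlap3 a b c \<psi>)"
      unfolding overlap_values_def by blast
    then show "x \<in> ?f ` ?S"
      by (intro image_eqI[of _ _ "(a, b, c)"]) auto
  qed
  then show ?thesis by (simp add: G_def)
qed

lemma G_sq_eq_attained_bound: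
  assumes bound: "\<And>a b c. qubit_normalized a \<Longrightarrow> qubit_normalized b \<Longrightarrow> qubit_normalized c
      \<Longrightarrow> (cmod (overlap3 a b c \<psi>))\<^sup>2 \<le> s"
    and attained: "\<exists>a b c. qubit_normalized a \<and> qubit_normalized b \<and> qubit_normalized c
      \<and> (cmod (overlap3 a b c \<psi>))\<^sup>2 = s"
  shows "(G \<psi>)\<^sup>2 = s"
proof -
  obtain a b c where abc: "qubit_normalized a" "qubit_normalized b" "qubit_normalized c"
      and s_eq: "(cmod (overlap3 a b c \<psi>))\<^sup>2 = s"
    using attained by blast
  have "sqrt s = cmod (overlap3 a b c \<psi>)"
    unfolding s_eq[symmetric] by simp
  then have max: "sqrt s \<in> overlap_values \<psi>"
    using abc unfolding overlap_values_def by blast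
  have upper: "y \<le> sqrt s" if "y \<in> overlap_values \<psi>" for y
    using that bound unfolding overlap_values_def by (auto simp: real_le_rsqrt)
  have "G \<psi> = sqrt s"
    unfolding G_eq_Sup_overlap_values using max upper by (rule cSup_eq_maximum)
  moreover have "s \<ge> 0"
    unfolding s_eq[symmetric] by simp
  ultimately show ?thesis by simp
qed

lemma G_sq_half_if_rho1:
  assumes "rho1 \<psi> = half_identity"
  shows "(G \<psi>)\<^sup>2 = 1/2"
  using overlap3_sq_le_half[OF assms] overlap3_sq_half_attained[OF assms]
  by (rule G_sq_eq_attained_bound)

lemma rho1_swap12: "rho1 (\<lambda>i j k. \<psi> j i k) = rho2 \<psi>"
  by (simp add: rho1_def rho2_def UNIV_bool fun_eq_iff algebra_simps)

lemma rho1_swap13: "rho1 (\<lambda>i j k. \<psi> k j i) = rho3 \<psi>"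
  by (simp add: rho1_def rho3_def UNIV_bool fun_eq_iff algebra_simps)

lemma G_swap12: "G (\<lambda>i j k. \<psi> j i k) = G \<psi>"
proof -
  have "overlap3 a b c (\<lambda>i j k. \<psi> j i k) = overlap3 b a c \<psi>" for a b c
    by (simp add: overlap3_def UNIV_bool algebra_simps)
  then have "overlap_values (\<lambda>i j k. \<psi> j i k) = overlap_values \<psi>"
    unfolding overlap_values_def by (simp only:) (intro Collect_cong; blast)
  then show ?thesis by (simp add: G_eq_Sup_overlap_values)
qed

lemma G_swap13: "G (\<lambda>i j k. \<psi> k j i) = G \<psi>"
proof -
  have "overlap3 a b c (\<lambda>i j k. \<psi> k j i) = overlap3 c b a \<psi>" for a b c
    by (simp add: overlap3_def UNIV_bool algebra_simps)
  then have "overlap_values (\<lambda>i j k. \<psi> k j i) = overlap_values \<psi>"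
    unfolding overlap_values_def by (simp only:) (intro Collect_cong; blast)
  then show ?thesis by (simp add: G_eq_Sup_overlap_values)
qed

lemma GHZ_rho1: "rho1 GHZ = half_identity"
proof -
  have half: "complex_of_real (1 / sqrt 2) * complex_of_real (1 / sqrt 2) = 1/2"
    by (simp only: of_real_mult[symmetric]) simp
  have two: "complex_of_real (sqrt 2) * complex_of_real (sqrt 2) = 2"
    by (simp only: of_real_mult[symmetric]) simp
  show ?thesis
    by (simp add: rho1_def GHZ_def half_identity_def UNIV_bool fun_eq_iff half two)
qed

theorem mainTheorem5:
  fixes \<psi> :: "bool \<Rightarrow> bool \<Rightarrow> bool \<Rightarrow> complex"
  assumes "state3_normalized \<psi>"
    and "rho1 \<psi> = half_identity \<or> rho2 \<psi> = half_identity \<or> rho3 \<psi> = half_identity"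
  shows "(G \<psi>)\<^sup>2 = 1/2 \<and> (G GHZ)\<^sup>2 = 1/2"
proof
  show "(G \<psi>)\<^sup>2 = 1/2"
    using assms(2)
  proof (elim disjE)
    assume "rho1 \<psi> = half_identity"
    then show ?thesis by (rule G_sq_half_if_rho1)
  next
    assume "rho2 \<psi> = half_identity"
    then have "rho1 (\<lambda>i j k. \<psi> j i k) = half_identity"
      by (simp only: rho1_swap12)
    then have "(G (\<lambda>i j k. \<psi> j i k))\<^sup>2 = 1/2"
      by (rule G_sq_half_if_rho1)
    then show ?thesis unfolding G_swap12[of \<psi>] .
  next
    assume "rho3 \<psi> = half_identity"
    then have "rho1 (\<lambda>i j k. \<psi> k j i) = half_identity"
      by (simp only: rho1_swap13)
    then have "(G (\<lambda>i j k. \<psi> k j i))\<^sup>2 = 1/2"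
      by (rule G_sq_half_if_rho1)
    then show ?thesis unfolding G_swap13[of \<psi>] .
  qed
  show "(G GHZ)\<^sup>2 = 1/2"
    using GHZ_rho1 by (rule G_sq_half_if_rho1)
qed

end
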